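(* Let $C$ be a subring of a ring $D$ (with the same identity). Then $R[D,C]$ is weakly $r$-clean if and only if $D$ is $r$-clean and $C$ is weakly $r$-clean.
   Context: Rings are associative with identity. For a subring $C$ of $D$, $R[D,C]$ is the ring of all sequences $(a_1,a_2,\dots,a_n,c,c,c,\dots)$ with $n\ge1$, $a_i\in D$, $c\in C$ (i.e. sequences in $D$ that are eventually constant with constant value in $C$), with componentwise addition and multiplication. $Idem(R)$ denotes idempotents and $Reg(R)=\{r: r=ryr \text{ for some } y\in R\}$ regular elements. A ring is $r$-clean if every element is $r+e$ with $r\in Reg$, $e\in Idem$; an element is weakly $r$-clean if it equals $r+e$ or $r-e$ with $r\in Reg$, $e\in Idem$, and a ring is weakly $r$-clean if all its elements are. *)

theory Defs
  imports Main "HOL-Library.Function_Algebras"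
begin

text \<open>Rings: associative with identity, type class {ring, monoid_mult} (zero ring allowed).
  Ring-theoretic notions are taken relative to a carrier set S (a subring of the ambient type).\<close>

definition is_subring :: "'a::{ring,monoid_mult} set \<Rightarrow> bool" where
  "is_subring C \<longleftrightarrow> 1 \<in> C \<and> 0 \<in> C \<and> (\<forall>x\<in>C. \<forall>y\<in>C. x + y \<in> C \<and> x - y \<in> C \<and> x * y \<in> C) \<and> (\<forall>x\<in>C. - x \<in> C)"

definition Idem_in :: "'a::{ring,monoid_mult} set \<Rightarrow> 'a set" where
  "Idem_in S = {e \<in> S. e * e = e}"

definition Reg_in :: "'a::{ring,monoid_mult} set \<Rightarrow> 'a set" where
  "Reg_in S = {r \<in> S. \<exists>y\<in>S. r = r * y * r}"

definition r_clean :: "'a::{ring,monoid_mult} set \<Rightarrow> bool" where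
  "r_clean S \<longleftrightarrow> (\<forall>x\<in>S. \<exists>r\<in>Reg_in S. \<exists>e\<in>Idem_in S. x = r + e)"

definition weakly_r_clean :: "'a::{ring,monoid_mult} set \<Rightarrow> bool" where
  "weakly_r_clean S \<longleftrightarrow> (\<forall>x\<in>S. \<exists>r\<in>Reg_in S. \<exists>e\<in>Idem_in S. x = r + e \<or> x = r - e)"

text \<open>R[D,C] with D = UNIV: sequences (indexed from 0) in D that are eventually constant
  with constant value in C; ring operations are pointwise (Function_Algebras).\<close>
definition RDC :: "'a::{ring,monoid_mult} set \<Rightarrow> (nat \<Rightarrow> 'a) set" where
  "RDC C = {f. \<exists>n. \<exists>c\<in>C. \<forall>i\<ge>n. f i = c}"

end

theory Submission
  imports Defs
begin

text \<open>Evaluation at an index is a ring homomorphism R[D,C] \<rightarrow> D, and the eventual value is a ring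
  homomorphism R[D,C] \<rightarrow> C; both preserve regular elements and idempotents. Evaluating at a
  sequence that is eventually constant c shows that C is weakly r-clean; evaluating the sequence
  (d, -d, 0, 0, \<dots>) at index 0 or 1 writes d as regular plus idempotent, so D is r-clean.
  Conversely, a sequence in R[D,C] is decomposed coordinatewise: on its non-constant prefix by
  r-cleanness of D (applied to -x when a decomposition x = r - e is wanted), on its tail by the
  decomposition of the constant value in C, and the inner inverses of the regular part are
  glued together in the same way.\<close>

lemma RDC_iff_eventually:
  "f \<in> RDC C \<longleftrightarrow> (\<exists>c\<in>C. \<forall>\<^sub>F i in sequentially. f i = c)"
  unfolding RDC_def eventually_sequentially by blast

lemma RDC_const: "c \<in> C \<Longrightarrow> (\<lambda>_. c) \<in> RDC C"
  by (auto simp: RDC_iff_eventually)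

lemma Reg_in_apply:
  fixes S :: "(nat \<Rightarrow> 'a::{ring,monoid_mult}) set"
  assumes "r \<in> Reg_in S"
  shows "r i \<in> Reg_in UNIV"
proof -
  obtain y where "r = r * y * r" using assms unfolding Reg_in_def by blast
  then have "r i = r i * y i * r i" by (metis times_fun_def)
  then show ?thesis unfolding Reg_in_def by blast
qed

lemma Idem_in_apply:
  fixes S :: "(nat \<Rightarrow> 'a::{ring,monoid_mult}) set"
  assumes "e \<in> Idem_in S"
  shows "e i \<in> Idem_in UNIV"
proof -
  have "e * e = e" using assms unfolding Idem_in_def by blast
  then have "e i * e i = e i" by (metis times_fun_def)
  then show ?thesis unfolding Idem_in_def by blast
qed

lemma Reg_in_RDC_eventually:
  fixes C :: "'a::{ring,monoid_mult} set"
  assumes "r \<in> Reg_in (RDC C)"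
  shows "\<exists>c\<in>Reg_in C. \<forall>\<^sub>F i in sequentially. r i = c"
proof -
  obtain y where "y \<in> RDC C" and ryr: "r = r * y * r" and "r \<in> RDC C"
    using assms unfolding Reg_in_def by blast
  then obtain c d where cd: "c \<in> C" "d \<in> C"
    and "\<forall>\<^sub>F i in sequentially. r i = c" "\<forall>\<^sub>F i in sequentially. y i = d"
    by (auto simp: RDC_iff_eventually)
  from this(3,4) have ev: "\<forall>\<^sub>F i in sequentially. r i = c \<and> y i = d"
    by (rule eventually_conj)
  have "\<forall>\<^sub>F i in sequentially. c = c * d * c"
    using ev by eventually_elim (metis ryr times_fun_def)
  then have "c \<in> Reg_in C" using cd unfolding Reg_in_def by auto
  moreover have "\<forall>\<^sub>F i in sequentially. r i = c" using ev by (rule eventually_mono) simp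
  ultimately show ?thesis by blast
qed

lemma Idem_in_RDC_eventually:
  fixes C :: "'a::{ring,monoid_mult} set"
  assumes "e \<in> Idem_in (RDC C)"
  shows "\<exists>c\<in>Idem_in C. \<forall>\<^sub>F i in sequentially. e i = c"
proof -
  obtain c where c: "c \<in> C" and ev: "\<forall>\<^sub>F i in sequentially. e i = c"
    using assms by (auto simp: Idem_in_def RDC_iff_eventually)
  have "\<forall>\<^sub>F i in sequentially. c * c = c"
    using ev by (rule eventually_mono) (use Idem_in_apply[OF assms] in \<open>auto simp: Idem_in_def\<close>)
  with c ev show ?thesis unfolding Idem_in_def by auto
qed

lemma weakly_r_clean_of_weakly_r_clean_RDC:
  fixes C :: "'a::{ring,monoid_mult} set"
  assumes "weakly_r_clean (RDC C)"
  shows "weakly_r_clean C"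
  unfolding weakly_r_clean_def
proof
  fix c assume "c \<in> C"
  then obtain r e where r: "r \<in> Reg_in (RDC C)" and e: "e \<in> Idem_in (RDC C)"
    and split: "(\<lambda>_. c) = r + e \<or> (\<lambda>_. c) = r - e"
    using assms RDC_const unfolding weakly_r_clean_def by blast
  obtain a b where "a \<in> Reg_in C" "b \<in> Idem_in C"
    and "\<forall>\<^sub>F i in sequentially. r i = a" "\<forall>\<^sub>F i in sequentially. e i = b"
    using Reg_in_RDC_eventually[OF r] Idem_in_RDC_eventually[OF e] by blast
  moreover from this(3,4) have ev: "\<forall>\<^sub>F i in sequentially. r i = a \<and> e i = b"
    by (rule eventually_conj)
  moreover have "\<forall>\<^sub>F i in sequentially. c = a + b \<or> c = a - b"
    using ev by eventually_elim (use split in \<open>auto simp: fun_eq_iff\<close>)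
  ultimately show "\<exists>r\<in>Reg_in C. \<exists>e\<in>Idem_in C. c = r + e \<or> c = r - e" by auto
qed

lemma uminus_Reg_in_UNIV:
  fixes r :: "'a::{ring,monoid_mult}"
  assumes "r \<in> Reg_in UNIV"
  shows "- r \<in> Reg_in UNIV"
proof -
  obtain y where "r = r * y * r" using assms unfolding Reg_in_def by blast
  then have "- r = (- r) * (- y) * (- r)" by simp
  then show ?thesis unfolding Reg_in_def by blast
qed

lemma r_clean_of_weakly_r_clean_RDC:
  fixes C :: "'a::{ring,monoid_mult} set"
  assumes "0 \<in> C" and "weakly_r_clean (RDC C)"
  shows "r_clean (UNIV :: 'a set)"
  unfolding r_clean_def
proof
  fix d :: 'a
  define x :: "nat \<Rightarrow> 'a" where "x = (\<lambda>i. if i = 0 then d else if i = 1 then - d else 0)"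
  have "x \<in> RDC C"
    using \<open>0 \<in> C\<close> unfolding RDC_def x_def by (intro CollectI exI[of _ 2] bexI[of _ 0]) auto
  then obtain r e where r: "r \<in> Reg_in (RDC C)" and e: "e \<in> Idem_in (RDC C)"
    and split: "x = r + e \<or> x = r - e"
    using assms(2) unfolding weakly_r_clean_def by blast
  from split have "x 0 = r 0 + e 0 \<or> x 1 = r 1 - e 1"
    by (auto simp: plus_fun_def fun_diff_def)
  then have "d = r 0 + e 0 \<or> - d = r 1 - e 1" by (simp add: x_def)
  then consider "d = r 0 + e 0" | "d = - r 1 + e 1"
    by (metis minus_diff_eq minus_minus add_uminus_conv_diff add.commute)
  then show "\<exists>r\<in>Reg_in UNIV. \<exists>e\<in>Idem_in UNIV. d = r + e"
    by cases (use Reg_in_apply[OF r] Idem_in_apply[OF e] uminus_Reg_in_UNIV in blast)+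
qed

lemma r_clean_UNIV_diff:
  fixes d :: "'a::{ring,monoid_mult}"
  assumes "r_clean (UNIV :: 'a set)"
  shows "\<exists>r\<in>Reg_in UNIV. \<exists>e\<in>Idem_in UNIV. d = r - e"
proof -
  obtain r e where r: "r \<in> Reg_in UNIV" and "e \<in> Idem_in UNIV" and "- d = r + e"
    using assms unfolding r_clean_def by blast
  moreover from \<open>- d = r + e\<close> have "d = - r - e"
    by (metis minus_minus minus_add_distrib diff_conv_add_uminus)
  ultimately show ?thesis using uminus_Reg_in_UNIV[OF r] by blast
qed

lemma Reg_in_RDC_glue:
  fixes C :: "'a::{ring,monoid_mult} set"
  assumes "\<And>i. i < n \<Longrightarrow> r i \<in> Reg_in UNIV" and "c \<in> Reg_in C" and "\<And>i. i \<ge> n \<Longrightarrow> r i = c"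
  shows "r \<in> Reg_in (RDC C)"
proof -
  obtain z where z: "z \<in> C" "c = c * z * c" "c \<in> C" using assms(2) unfolding Reg_in_def by blast
  define y where "y i = (if i < n then SOME y. r i = r i * y * r i else z)" for i
  have "r i = r i * y i * r i" for i
    using assms(1)[of i] assms(3)[of i] z(2)
    by (cases "i < n") (auto simp: y_def Reg_in_def intro: someI_ex)
  then have "r = r * y * r" by (simp add: fun_eq_iff times_fun_def)
  moreover have "r \<in> RDC C" "y \<in> RDC C"
    using assms(3) z unfolding RDC_def y_def by (auto intro!: exI[of _ n])
  ultimately show ?thesis unfolding Reg_in_def by blast
qed

lemma RDC_decomposition_glue:
  fixes C :: "'a::{ring,monoid_mult} set" and op :: "'a \<Rightarrow> 'a \<Rightarrow> 'a"
  assumes D: "\<And>d. \<exists>r\<in>Reg_in UNIV. \<exists>e\<in>Idem_in UNIV. d = op r e"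
    and a: "a \<in> Reg_in C" and b: "b \<in> Idem_in C" and tail: "\<And>i. i \<ge> n \<Longrightarrow> x i = op a b"
  shows "\<exists>r\<in>Reg_in (RDC C). \<exists>e\<in>Idem_in (RDC C). \<forall>i. x i = op (r i) (e i)"
proof -
  obtain \<rho> \<epsilon> where \<rho>\<epsilon>: "\<And>d. \<rho> d \<in> Reg_in UNIV" "\<And>d. \<epsilon> d \<in> Idem_in UNIV"
    "\<And>d. d = op (\<rho> d) (\<epsilon> d)"
    using D by metis
  define r where "r i = (if i < n then \<rho> (x i) else a)" for i
  define e where "e i = (if i < n then \<epsilon> (x i) else b)" for i
  have "r \<in> Reg_in (RDC C)"
    using a by (intro Reg_in_RDC_glue[of n]) (auto simp: r_def \<rho>\<epsilon>)
  moreover have "e \<in> Idem_in (RDC C)"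
    using b \<rho>\<epsilon>(2) unfolding Idem_in_def RDC_def
    by (auto simp: fun_eq_iff times_fun_def e_def intro!: exI[of _ n])
  moreover have "x i = op (r i) (e i)" for i
    using tail[of i] \<rho>\<epsilon>(3)[of "x i"] by (auto simp: r_def e_def)
  ultimately show ?thesis by blast
qed

lemma weakly_r_clean_RDC:
  fixes C :: "'a::{ring,monoid_mult} set"
  assumes D: "r_clean (UNIV :: 'a set)" and "weakly_r_clean C"
  shows "weakly_r_clean (RDC C)"
  unfolding weakly_r_clean_def
proof
  fix x assume "x \<in> RDC C"
  then obtain n c where "c \<in> C" and tail: "\<And>i. i \<ge> n \<Longrightarrow> x i = c" unfolding RDC_def by blast
  then obtain a b where ab: "a \<in> Reg_in C" "b \<in> Idem_in C" and "c = a + b \<or> c = a - b"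
    using assms(2) unfolding weakly_r_clean_def by blast
  then consider "\<And>i. i \<ge> n \<Longrightarrow> x i = a + b" | "\<And>i. i \<ge> n \<Longrightarrow> x i = a - b"
    using tail by blast
  then show "\<exists>r\<in>Reg_in (RDC C). \<exists>e\<in>Idem_in (RDC C). x = r + e \<or> x = r - e"
  proof cases
    case 1
    have "\<exists>r\<in>Reg_in UNIV. \<exists>e\<in>Idem_in UNIV. d = r + e" for d :: 'a
      using D unfolding r_clean_def by blast
    from RDC_decomposition_glue[where op = "(+)" and n = n and x = x, OF this ab 1] obtain r e
      where "r \<in> Reg_in (RDC C)" "e \<in> Idem_in (RDC C)" "\<forall>i. x i = r i + e i"
      by blast
    then show ?thesis by (auto simp: fun_eq_iff plus_fun_def)
  next
    case 2
    from RDC_decomposition_glue[where op = "(-)" and n = n and x = x,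
        OF r_clean_UNIV_diff[OF D] ab 2]
    obtain r e
      where "r \<in> Reg_in (RDC C)" "e \<in> Idem_in (RDC C)" "\<forall>i. x i = r i - e i"
      by blast
    then show ?thesis by (auto simp: fun_eq_iff fun_diff_def)
  qed
qed

theorem proposition2p13:
  fixes C :: "'a::{ring,monoid_mult} set"
  assumes "is_subring C"
  shows "weakly_r_clean (RDC C) \<longleftrightarrow> r_clean (UNIV :: 'a set) \<and> weakly_r_clean C"
proof -
  have "0 \<in> C" using assms unfolding is_subring_def by blast
  then show ?thesis
    using weakly_r_clean_of_weakly_r_clean_RDC r_clean_of_weakly_r_clean_RDC weakly_r_clean_RDC
    by blast
qed

end
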